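(* Let $w_1,w_2,\ldots$ be i.i.d. random variables from a distribution $\mathbb{P}_w\in\mathcal{D}_1\cup\mathcal{D}_2$. Then $\lim_{n\to\infty}\mathbb{P}\bigl(\sum_{i=1}^n w_i^2\ge\frac{1}{2}n\bigr)=1$.
   Context: For $s>0$, $\mathcal{D}_s$ is the class of distributions of $\xi$ with $\mathbb{E}[\xi]=0$ and $1\le\mathbb{E}[|\xi|^s]\le2$. *)

theory Defs
  imports "HOL-Probability.Probability"
begin

definition Dclass :: "real \<Rightarrow> real measure set" where
  "Dclass s = {\<mu>. prob_space \<mu> \<and> sets \<mu> = sets borel \<and>
      integrable \<mu> (\<lambda>x. x) \<and> (\<integral>x. x \<partial>\<mu>) = 0 \<and>
      1 \<le> (\<integral>\<^sup>+x. ennreal (\<bar>x\<bar> powr s) \<partial>\<mu>) \<and>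
      (\<integral>\<^sup>+x. ennreal (\<bar>x\<bar> powr s) \<partial>\<mu>) \<le> 2}"

end

theory Submission
  imports Defs
begin

(* In both classes the second moment E[w^2] is at least 1; for D_1 this follows from
   2|x| <= x^2 + 1. By monotone convergence some truncation min(w^2, K) still has mean
   above 1/2, and the truncated variables are bounded and i.i.d., so by Hoeffding's
   inequality P(sum_i min(w_i^2, K) <= n/2) decays exponentially in n. Since
   sum_i w_i^2 >= sum_i min(w_i^2, K), the claim follows. *)

lemma square_moment_ge_1_if_abs_moment_ge_1:
  fixes M :: "real measure"
  assumes "prob_space M" and [measurable_cong]: "sets M = sets borel"
    and abs_moment: "1 \<le> (\<integral>\<^sup>+x. ennreal \<bar>x\<bar> \<partial>M)"
  shows "1 \<le> (\<integral>\<^sup>+x. ennreal (x\<^sup>2) \<partial>M)"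
proof -
  interpret prob_space M by fact
  have "2 \<le> 2 * (\<integral>\<^sup>+x. ennreal \<bar>x\<bar> \<partial>M)"
    using mult_left_mono[OF abs_moment, of 2] by simp
  also have "\<dots> = (\<integral>\<^sup>+x. ennreal (2 * \<bar>x\<bar>) \<partial>M)"
    by (simp add: nn_integral_cmult ennreal_mult)
  also have "\<dots> \<le> (\<integral>\<^sup>+x. ennreal (x\<^sup>2) + 1 \<partial>M)"
  proof (intro nn_integral_mono)
    fix x :: real
    have "2 * \<bar>x\<bar> \<le> x\<^sup>2 + 1"
      using sum_squares_bound[of "\<bar>x\<bar>" 1] by simp
    then show "ennreal (2 * \<bar>x\<bar>) \<le> ennreal (x\<^sup>2) + 1"
      by (metis ennreal_leI ennreal_plus ennreal_1 zero_le_power2 zero_le_one)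
  qed
  also have "\<dots> = (\<integral>\<^sup>+x. ennreal (x\<^sup>2) \<partial>M) + 1"
    by (simp add: nn_integral_add emeasure_space_1)
  finally show ?thesis
    by (cases "\<integral>\<^sup>+x. ennreal (x\<^sup>2) \<partial>M")
       (auto simp flip: ennreal_plus ennreal_1 simp del: ennreal_plus)
qed

lemma Dclass_square_moment_ge_1:
  assumes "\<mu> \<in> Dclass 1 \<union> Dclass 2"
  shows "1 \<le> (\<integral>\<^sup>+x. ennreal (x\<^sup>2) \<partial>\<mu>)"
  using assms square_moment_ge_1_if_abs_moment_ge_1[of \<mu>] by (auto simp: Dclass_def)

lemma SUP_nn_integral_truncation:
  assumes [measurable]: "g \<in> borel_measurable M"
  shows "(SUP K::nat. \<integral>\<^sup>+x. ennreal (min (g x) (real K)) \<partial>M) = (\<integral>\<^sup>+x. ennreal (g x) \<partial>M)"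
proof -
  have "incseq (\<lambda>K::nat. \<lambda>x. ennreal (min (g x) (real K)))"
    by (auto simp: incseq_def le_fun_def intro!: ennreal_leI)
  moreover have "(SUP K::nat. ennreal (min (g x) (real K))) = ennreal (g x)" for x
  proof (rule antisym)
    have "ennreal (min (g x) (real (nat \<lceil>g x\<rceil>))) = ennreal (g x)"
      by (cases "g x \<le> 0") (auto simp: min_def ennreal_neg)
    then show "ennreal (g x) \<le> (SUP K::nat. ennreal (min (g x) (real K)))"
      by (metis SUP_upper UNIV_I)
  qed (auto intro!: SUP_least ennreal_leI)
  ultimately show ?thesis
    by (simp add: nn_integral_monotone_convergence_SUP[symmetric])
qed

lemma (in prob_space) expectation_truncated_square_gt:
  assumes [measurable]: "X \<in> borel_measurable M"
    and "0 \<le> c" and square_moment: "ennreal c < (\<integral>\<^sup>+x. ennreal (x\<^sup>2) \<partial>distr M borel X)"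
  shows "\<exists>K::nat. 0 < K \<and> c < expectation (\<lambda>x. min ((X x)\<^sup>2) (real K))"
proof -
  obtain K :: nat where K: "ennreal c < (\<integral>\<^sup>+x. ennreal (min (x\<^sup>2) (real K)) \<partial>distr M borel X)"
    using square_moment by (subst (asm) SUP_nn_integral_truncation[symmetric]) (auto simp: less_SUP_iff)
  have "K \<noteq> 0"
  proof
    assume "K = 0"
    with K \<open>0 \<le> c\<close> show False
      by simp
  qed
  from K have "ennreal c < (\<integral>\<^sup>+x. ennreal (min ((X x)\<^sup>2) (real K)) \<partial>M)"
    by (simp add: nn_integral_distr)
  also have "\<dots> = ennreal (expectation (\<lambda>x. min ((X x)\<^sup>2) (real K)))"
    by (intro nn_integral_eq_integral integrable_const_bound[where B="real K"]) auto
  finally have "c < expectation (\<lambda>x. min ((X x)\<^sup>2) (real K))"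
    using \<open>0 \<le> c\<close> by (simp add: ennreal_less_iff)
  with \<open>K \<noteq> 0\<close> show ?thesis
    by blast
qed

lemma distr_comp_eq:
  assumes "X \<in> measurable M N" and "Y \<in> measurable M N" and "g \<in> measurable N L"
    and "distr M N X = distr M N Y"
  shows "distr M L (\<lambda>x. g (X x)) = distr M L (\<lambda>x. g (Y x))"
proof -
  have "distr M L (\<lambda>x. g (X x)) = distr (distr M N X) L g"
    using assms(1,3) by (simp add: distr_distr comp_def)
  also have "\<dots> = distr (distr M N Y) L g"
    by (simp only: assms(4))
  also have "\<dots> = distr M L (\<lambda>x. g (Y x))"
    using assms(2,3) by (simp add: distr_distr comp_def)
  finally show ?thesis .
qed

lemma (in prob_space) iid_bounded_lower_tail_tendsto_0:
  fixes X :: "nat \<Rightarrow> 'a \<Rightarrow> real"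
  assumes indep: "indep_vars (\<lambda>_. borel) X {1..}"
    and distr: "\<And>i. i \<ge> 1 \<Longrightarrow> distr M borel (X i) = distr M borel (X 1)"
    and bounded: "AE x in M. X 1 x \<in> {a..b}" and "a < b"
    and below_mean: "c < expectation (X 1)"
  shows "(\<lambda>n. prob {x \<in> space M. (\<Sum>i=1..n. X i x) \<le> real n * c}) \<longlonglongrightarrow> 0"
proof -
  define \<epsilon> where "\<epsilon> = expectation (X 1) - c"
  have Hoeffding_bound:
    "prob {x \<in> space M. (\<Sum>i=1..n. X i x) \<le> real n * c} \<le> exp (-2 * real n * \<epsilon>\<^sup>2 / (b - a)\<^sup>2)"
    if "n \<ge> 1" for n
  proof -
    have "0 \<le> \<epsilon>" "{1..n} \<noteq> {}"
      using below_mean that by (simp_all add: \<epsilon>_def)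
    interpret Hoeffding_ineq_iid M "{1..n}" X "X 1" a b "expectation (X 1)"
    proof unfold_locales
      show "indep_vars (\<lambda>_. borel) X {1..n}"
        by (rule indep_vars_subset[OF indep]) auto
      show "random_variable borel (X 1)"
        using indep unfolding indep_vars_def by blast
      show "finite {1..n}" by simp
      show "distr M borel (X i) = distr M borel (X 1)" if "i \<in> {1..n}" for i
        using that by (intro distr) simp
      show "AE x in M. X 1 x \<in> {a..b}" by (fact bounded)
    qed
    \<comment> \<open>The interpreted simp rule expectation_X rewrites expectation (X 1) to itself and loops.\<close>
    have "{x \<in> space M. (\<Sum>i=1..n. X i x) \<le> real n * c} =
          {x \<in> space M. (\<Sum>i=1..n. X i x) / real n \<le> expectation (X 1) - \<epsilon>}"
      using that by (auto simp: \<epsilon>_def field_simps simp del: expectation_X)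
    moreover have "card {1..n} = n"
      by simp
    ultimately show ?thesis
      using Hoeffding_ineq_le'[OF \<open>0 \<le> \<epsilon>\<close> \<open>a < b\<close> \<open>{1..n} \<noteq> {}\<close>] by (simp only:)
  qed
  have exp_tendsto_0: "(\<lambda>n. exp (-2 * real n * \<epsilon>\<^sup>2 / (b - a)\<^sup>2)) \<longlonglongrightarrow> 0"
  proof -
    have "exp (-2 * \<epsilon>\<^sup>2 / (b - a)\<^sup>2) < 1"
      using below_mean \<open>a < b\<close> by (simp add: \<epsilon>_def)
    then have "(\<lambda>n. exp (-2 * \<epsilon>\<^sup>2 / (b - a)\<^sup>2) ^ n) \<longlonglongrightarrow> 0"
      by (intro LIMSEQ_realpow_zero) auto
    then show ?thesis
      by (simp add: exp_of_nat_mult[symmetric] mult_ac)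
  qed
  show ?thesis
  proof (rule tendsto_sandwich[OF _ _ tendsto_const exp_tendsto_0])
    show "\<forall>\<^sub>F n in sequentially. prob {x \<in> space M. (\<Sum>i=1..n. X i x) \<le> real n * c} \<le>
        exp (-2 * real n * \<epsilon>\<^sup>2 / (b - a)\<^sup>2)"
      using Hoeffding_bound by (rule eventually_sequentiallyI)
  qed simp
qed

lemma (in prob_space) prob_tendsto_1_if_compl_subset:
  assumes "(\<lambda>n. prob (B n)) \<longlonglongrightarrow> 0" and "\<And>n. space M - A n \<subseteq> B n"
    and "\<And>n. A n \<in> events" and "\<And>n. B n \<in> events"
  shows "(\<lambda>n. prob (A n)) \<longlonglongrightarrow> 1"
proof (rule tendsto_sandwich[OF _ _ _ tendsto_const])
  have "1 - prob (B n) \<le> prob (A n)" for n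
    using finite_measure_mono[OF assms(2)[of n] assms(4)[of n]] prob_compl[OF assms(3)[of n]]
    by simp
  then show "\<forall>\<^sub>F n in sequentially. 1 - prob (B n) \<le> prob (A n)"
    by simp
  show "(\<lambda>n. 1 - prob (B n)) \<longlonglongrightarrow> 1"
    using tendsto_diff[OF tendsto_const assms(1), of 1] by simp
qed simp

theorem lemmaA9:
  fixes M :: "'a measure" and w :: "nat \<Rightarrow> 'a \<Rightarrow> real"
  assumes "prob_space M"
    and "\<And>i. i \<ge> 1 \<Longrightarrow> w i \<in> borel_measurable M"
    and "prob_space.indep_vars M (\<lambda>_. borel) w {1..}"
    and "\<And>i. i \<ge> 1 \<Longrightarrow> distr M borel (w i) = distr M borel (w 1)"
    and "distr M borel (w 1) \<in> Dclass 1 \<union> Dclass 2"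
  shows "(\<lambda>n. measure M {x \<in> space M. (\<Sum>i=1..n. (w i x)\<^sup>2) \<ge> real n / 2})
           \<longlonglongrightarrow> 1"
proof -
  interpret prob_space M by fact
  have sum_measurable: "(\<lambda>x. \<Sum>i=1..n. g (w i x)) \<in> borel_measurable M"
    if "g \<in> borel_measurable borel" for g :: "real \<Rightarrow> real" and n
    by (intro borel_measurable_sum measurable_compose[OF assms(2) that]) simp
  have "ennreal (1/2) < 1"
    using ennreal_lessI[of 1 "1/2"] by simp
  also have "1 \<le> (\<integral>\<^sup>+x. ennreal (x\<^sup>2) \<partial>distr M borel (w 1))"
    using assms(5) by (rule Dclass_square_moment_ge_1)
  finally have square_moment: "ennreal (1/2) < (\<integral>\<^sup>+x. ennreal (x\<^sup>2) \<partial>distr M borel (w 1))" .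
  obtain K :: nat where "0 < K" and mean_gt: "1/2 < expectation (\<lambda>x. min ((w 1 x)\<^sup>2) (real K))"
    using expectation_truncated_square_gt[OF assms(2)[of 1] _ square_moment] by auto
  define f where "f x = min (x\<^sup>2) (real K)" for x
  have f_measurable [measurable]: "f \<in> borel_measurable borel"
    unfolding f_def by measurable
  have "(\<lambda>n. prob {x \<in> space M. (\<Sum>i=1..n. f (w i x)) \<le> real n * (1/2)}) \<longlonglongrightarrow> 0"
  proof (rule iid_bounded_lower_tail_tendsto_0[where X="\<lambda>i x. f (w i x)" and a=0 and b="real K"])
    show "indep_vars (\<lambda>_. borel) (\<lambda>i x. f (w i x)) {1..}"
      using assms(3) by (rule indep_vars_compose2) simp
    show "distr M borel (\<lambda>x. f (w i x)) = distr M borel (\<lambda>x. f (w 1 x))" if "i \<ge> 1" for i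
      by (rule distr_comp_eq[OF assms(2)[OF that] assms(2) f_measurable assms(4)[OF that]]) simp
  qed (use \<open>0 < K\<close> mean_gt in \<open>auto simp: f_def\<close>)
  then show ?thesis
  proof (rule prob_tendsto_1_if_compl_subset)
    show "space M - {x \<in> space M. real n / 2 \<le> (\<Sum>i=1..n. (w i x)\<^sup>2)} \<subseteq>
          {x \<in> space M. (\<Sum>i=1..n. f (w i x)) \<le> real n * (1/2)}" for n
    proof
      fix x assume "x \<in> space M - {x \<in> space M. real n / 2 \<le> (\<Sum>i=1..n. (w i x)\<^sup>2)}"
      moreover have "(\<Sum>i=1..n. f (w i x)) \<le> (\<Sum>i=1..n. (w i x)\<^sup>2)"
        by (rule sum_mono) (simp add: f_def)
      ultimately show "x \<in> {x \<in> space M. (\<Sum>i=1..n. f (w i x)) \<le> real n * (1/2)}"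
        by auto
    qed
    show "{x \<in> space M. real n / 2 \<le> (\<Sum>i=1..n. (w i x)\<^sup>2)} \<in> events" for n
      using sum_measurable[of "\<lambda>x. x\<^sup>2" n] by measurable
    show "{x \<in> space M. (\<Sum>i=1..n. f (w i x)) \<le> real n * (1/2)} \<in> events" for n
      using sum_measurable[of f n] by measurable
  qed
qed

end
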